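(* Let $\Gamma$ and $G$ be groups and suppose the projection $\mathrm{pr}\colon\Gamma\wr G\to G$ factors as $\Gamma\wr G\xrightarrow{p}H\xrightarrow{r}G$ with $p,r$ surjective homomorphisms. Let $H_1,H_2$ be normal subgroups of $H$ and write $G_i=r(H_i)$. Assume $G_1\neq1$, $G_2\neq1$, $G=G_1\times G_2$, and $[H_1,H_2]=1$. Then $\mathrm{Ker}(p)\subseteq\Gamma^G$ surjects onto $\Gamma$ under the evaluation map $e_1\colon f\mapsto f(1)$.
   Context: The wreath product is $\Gamma\wr G=\Gamma^G\rtimes G$, where $\Gamma^G$ is the group of all functions $f\colon G\to\Gamma$ and $G$ acts from the right by $f^h(g)=f(hg)$. $\mathrm{pr}\colon\Gamma\wr G\to G$, $(f,g)\mapsto g$, and $e_g\colon\Gamma^G\to\Gamma$, $f\mapsto f(g)$. *)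

theory Defs
  imports "HOL-Algebra.Algebra"
begin

text \<open>Wreath product Gamma wr G = Gamma^G semidirect G, where G acts on Gamma^G from the right
  by f^h(g) = f(h g).\<close>

definition wr_act :: "('b, 'd) monoid_scheme \<Rightarrow> ('b \<Rightarrow> 'a) \<Rightarrow> 'b \<Rightarrow> ('b \<Rightarrow> 'a)" where
  "wr_act G f h = (\<lambda>x\<in>carrier G. f (h \<otimes>\<^bsub>G\<^esub> x))"

definition wreath :: "('a, 'c) monoid_scheme \<Rightarrow> ('b, 'd) monoid_scheme \<Rightarrow> (('b \<Rightarrow> 'a) \<times> 'b) monoid" where
  "wreath Gam G =
    \<lparr> partial_object.carrier = (carrier G \<rightarrow>\<^sub>E carrier Gam) \<times> carrier G,
      monoid.mult = (\<lambda>(f, g) (f', g'). ((\<lambda>x\<in>carrier G. wr_act G f g' x \<otimes>\<^bsub>Gam\<^esub> f' x), g \<otimes>\<^bsub>G\<^esub> g')),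
      monoid.one = ((\<lambda>x\<in>carrier G. \<one>\<^bsub>Gam\<^esub>), \<one>\<^bsub>G\<^esub>) \<rparr>"

definition wr_pr :: "(('b \<Rightarrow> 'a) \<times> 'b) \<Rightarrow> 'b" where
  "wr_pr = snd"

definition wr_eval :: "'b \<Rightarrow> (('b \<Rightarrow> 'a) \<times> 'b) \<Rightarrow> 'a" where
  "wr_eval g x = fst x g"

end

theory Submission
  imports Defs
begin

text \<open>Lift elements of \<open>H\<^sub>1\<close> and \<open>H\<^sub>2\<close> with nontrivial images \<open>g \<in> G\<^sub>1\<close>, \<open>h \<in> G\<^sub>2\<close> to
  \<open>\<alpha> = (\<phi>, g)\<close> and \<open>\<beta> = (\<psi>, h)\<close>; then \<open>g h \<noteq> 1\<close> since \<open>G = G\<^sub>1 \<times> G\<^sub>2\<close>. For every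
  \<open>F = (f, 1)\<close> in the base group, \<open>p [F, \<alpha>] \<in> H\<^sub>1\<close> by normality, so it commutes with
  \<open>p \<beta> \<in> H\<^sub>2\<close> and \<open>[[F, \<alpha>], \<beta>] \<in> Ker p\<close>. The base component of this double commutator is
  explicit, and for \<open>f\<close> supported at \<open>g h\<close> its value at \<open>1\<close> is a conjugate of \<open>f (g h)\<close>,
  hence arbitrary.\<close>

definition commutator :: "('a, 'b) monoid_scheme \<Rightarrow> 'a \<Rightarrow> 'a \<Rightarrow> 'a" where
  "commutator G x y = inv\<^bsub>G\<^esub> x \<otimes>\<^bsub>G\<^esub> inv\<^bsub>G\<^esub> y \<otimes>\<^bsub>G\<^esub> x \<otimes>\<^bsub>G\<^esub> y"

lemma (in group) commutator_closed [intro, simp]: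
  "x \<in> carrier G \<Longrightarrow> y \<in> carrier G \<Longrightarrow> commutator G x y \<in> carrier G"
  by (simp add: commutator_def)

lemma (in group) inv_mult_cancel_left [simp]:
  "x \<in> carrier G \<Longrightarrow> y \<in> carrier G \<Longrightarrow> inv x \<otimes> (x \<otimes> y) = y"
  by (simp add: m_assoc[symmetric])

lemma (in group) commutator_eq_one_if_commute:
  assumes "x \<in> carrier G" "y \<in> carrier G" "x \<otimes> y = y \<otimes> x"
  shows "commutator G x y = \<one>"
proof -
  have "commutator G x y = inv (y \<otimes> x) \<otimes> (x \<otimes> y)"
    using assms(1,2) by (simp add: commutator_def inv_mult_group m_assoc)
  then show ?thesis
    using assms by simp
qed

lemma (in normal) commutator_mem_right:
  assumes "x \<in> carrier G" "y \<in> H"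
  shows "commutator G x y \<in> H"
  unfolding commutator_def using assms by (simp add: inv_op_closed1)

lemma (in group_hom) hom_commutator:
  "x \<in> carrier G \<Longrightarrow> y \<in> carrier G \<Longrightarrow> h (commutator G x y) = commutator H (h x) (h y)"
  by (simp add: commutator_def)

lemma (in group_hom) commutator_commutator_mem_kernel:
  assumes "N1 \<lhd> H" and commute: "\<forall>a\<in>N1. \<forall>b\<in>N2. a \<otimes>\<^bsub>H\<^esub> b = b \<otimes>\<^bsub>H\<^esub> a"
    and "x \<in> carrier G" "y \<in> carrier G" "h y \<in> N1" "z \<in> carrier G" "h z \<in> N2"
  shows "commutator G (commutator G x y) z \<in> kernel G H h"
proof -
  have "h (commutator G x y) \<in> N1"
    using assms(1,3-5) by (simp add: hom_commutator normal.commutator_mem_right)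
  then have "commutator H (h (commutator G x y)) (h z) = \<one>\<^bsub>H\<^esub>"
    using assms(3-7) commute by (simp add: H.commutator_eq_one_if_commute)
  then show ?thesis
    using assms(3,4,6) by (simp add: kernel_def hom_commutator)
qed

lemma (in group) DirProd_iso_mult_eq_one_imp:
  assumes "(\<lambda>(x, y). x \<otimes> y) \<in> iso (subgroup_generated G A \<times>\<times> subgroup_generated G B) G"
    and "A \<subseteq> carrier G" "B \<subseteq> carrier G" "a \<in> A" "b \<in> B" "a \<otimes> b = \<one>"
  shows "a = \<one>"
proof -
  have "inj_on (\<lambda>(x, y). x \<otimes> y)
      (carrier (subgroup_generated G A) \<times> carrier (subgroup_generated G B))"
    using assms(1) by (simp add: iso_def bij_betw_def)
  moreover have "a \<in> carrier (subgroup_generated G A)" "b \<in> carrier (subgroup_generated G B)"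
    "\<one> \<in> carrier (subgroup_generated G A)" "\<one> \<in> carrier (subgroup_generated G B)"
    using assms(2-5) by (auto simp: carrier_subgroup_generated intro: generate.incl generate.one)
  ultimately have "(a, b) = (\<one>, \<one>)"
    using assms(6) by (auto dest: inj_onD[of _ _ "(a, b)" "(\<one>, \<one>)"])
  then show ?thesis
    by simp
qed

lemma wreath_carrier:
  "carrier (wreath Gam G) = (carrier G \<rightarrow>\<^sub>E carrier Gam) \<times> carrier G"
  by (simp add: wreath_def)

lemma wreath_one:
  "\<one>\<^bsub>wreath Gam G\<^esub> = ((\<lambda>x\<in>carrier G. \<one>\<^bsub>Gam\<^esub>), \<one>\<^bsub>G\<^esub>)"
  by (simp add: wreath_def)

lemma wreath_mult:
  "(f, g) \<otimes>\<^bsub>wreath Gam G\<^esub> (f', g') =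
     ((\<lambda>x\<in>carrier G. f (g' \<otimes>\<^bsub>G\<^esub> x) \<otimes>\<^bsub>Gam\<^esub> f' x), g \<otimes>\<^bsub>G\<^esub> g')"
  by (auto simp: wreath_def wr_act_def fun_eq_iff)

lemma group_wreath:
  assumes "group Gam" "group G"
  shows "group (wreath Gam G)"
proof -
  interpret A: group Gam by fact
  interpret B: group G by fact
  show ?thesis
  proof (rule groupI)
    fix x y z
    assume x: "x \<in> carrier (wreath Gam G)" and y: "y \<in> carrier (wreath Gam G)"
      and z: "z \<in> carrier (wreath Gam G)"
    show "x \<otimes>\<^bsub>wreath Gam G\<^esub> y \<otimes>\<^bsub>wreath Gam G\<^esub> z
        = x \<otimes>\<^bsub>wreath Gam G\<^esub> (y \<otimes>\<^bsub>wreath Gam G\<^esub> z)"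
      using x y z
      by (cases x, cases y, cases z)
        (auto simp: wreath_carrier wreath_mult PiE_iff B.m_assoc A.m_assoc fun_eq_iff)
  next
    fix x y
    assume "x \<in> carrier (wreath Gam G)" "y \<in> carrier (wreath Gam G)"
    then show "x \<otimes>\<^bsub>wreath Gam G\<^esub> y \<in> carrier (wreath Gam G)"
      by (cases x, cases y) (auto simp: wreath_carrier wreath_mult PiE_iff)
  next
    show "\<one>\<^bsub>wreath Gam G\<^esub> \<in> carrier (wreath Gam G)"
      by (auto simp: wreath_carrier wreath_one)
  next
    fix x
    assume "x \<in> carrier (wreath Gam G)"
    then show "\<one>\<^bsub>wreath Gam G\<^esub> \<otimes>\<^bsub>wreath Gam G\<^esub> x = x"
      by (cases x) (auto simp: wreath_carrier wreath_mult wreath_one PiE_iff fun_eq_iff extensional_def)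
  next
    fix x
    assume x: "x \<in> carrier (wreath Gam G)"
    then obtain f g where fg: "x = (f, g)" "f \<in> carrier G \<rightarrow>\<^sub>E carrier Gam" "g \<in> carrier G"
      by (auto simp: wreath_carrier)
    let ?y = "((\<lambda>t\<in>carrier G. inv\<^bsub>Gam\<^esub> (f (inv\<^bsub>G\<^esub> g \<otimes>\<^bsub>G\<^esub> t))), inv\<^bsub>G\<^esub> g)"
    have "?y \<in> carrier (wreath Gam G)" "?y \<otimes>\<^bsub>wreath Gam G\<^esub> x = \<one>\<^bsub>wreath Gam G\<^esub>"
      using fg by (auto simp: wreath_carrier wreath_mult wreath_one PiE_iff fun_eq_iff B.m_assoc[symmetric])
    then show "\<exists>y\<in>carrier (wreath Gam G). y \<otimes>\<^bsub>wreath Gam G\<^esub> x = \<one>\<^bsub>wreath Gam G\<^esub>"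
      by blast
  qed
qed

lemma wreath_inv:
  assumes "group Gam" "group G" "(f, g) \<in> carrier (wreath Gam G)"
  shows "inv\<^bsub>wreath Gam G\<^esub> (f, g) = ((\<lambda>t\<in>carrier G. inv\<^bsub>Gam\<^esub> (f (inv\<^bsub>G\<^esub> g \<otimes>\<^bsub>G\<^esub> t))), inv\<^bsub>G\<^esub> g)"
proof -
  interpret A: group Gam by fact
  interpret B: group G by fact
  interpret W: group "wreath Gam G" using group_wreath assms(1,2) .
  show ?thesis
    using assms(3)
    by (intro W.inv_equality)
      (auto simp: wreath_carrier wreath_mult wreath_one PiE_iff fun_eq_iff B.m_assoc[symmetric])
qed

lemma wreath_commutator_base:
  assumes "group Gam" "group G" "f \<in> carrier G \<rightarrow>\<^sub>E carrier Gam" "(phi, g) \<in> carrier (wreath Gam G)"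
  shows "commutator (wreath Gam G) (f, \<one>\<^bsub>G\<^esub>) (phi, g) =
    ((\<lambda>x\<in>carrier G. inv\<^bsub>Gam\<^esub> (f x) \<otimes>\<^bsub>Gam\<^esub> inv\<^bsub>Gam\<^esub> (phi x) \<otimes>\<^bsub>Gam\<^esub> f (g \<otimes>\<^bsub>G\<^esub> x) \<otimes>\<^bsub>Gam\<^esub> phi x),
     \<one>\<^bsub>G\<^esub>)"
proof -
  interpret A: group Gam by fact
  interpret B: group G by fact
  show ?thesis
    using assms(3,4)
    by (auto simp: commutator_def wreath_inv[OF assms(1,2)] wreath_carrier wreath_mult PiE_iff
        fun_eq_iff B.m_assoc[symmetric])
qed

lemma wreath_double_commutator_eval_one:
  assumes "group Gam" "group G"
    and "(phi, g) \<in> carrier (wreath Gam G)" "(psi, h) \<in> carrier (wreath Gam G)"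
    and "g \<noteq> \<one>\<^bsub>G\<^esub>" "h \<noteq> \<one>\<^bsub>G\<^esub>" "g \<otimes>\<^bsub>G\<^esub> h \<noteq> \<one>\<^bsub>G\<^esub>" "c \<in> carrier Gam"
  obtains f where "f \<in> carrier G \<rightarrow>\<^sub>E carrier Gam"
    "wr_eval \<one>\<^bsub>G\<^esub> (commutator (wreath Gam G)
       (commutator (wreath Gam G) (f, \<one>\<^bsub>G\<^esub>) (phi, g)) (psi, h)) = c"
proof -
  interpret A: group Gam by fact
  interpret B: group G by fact
  have phi: "phi \<in> carrier G \<rightarrow>\<^sub>E carrier Gam" and g: "g \<in> carrier G"
    and psi: "psi \<in> carrier G \<rightarrow>\<^sub>E carrier Gam" and h: "h \<in> carrier G"
    using assms(3,4) by (auto simp: wreath_carrier)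
  have phi_1: "phi \<one>\<^bsub>G\<^esub> \<in> carrier Gam" and phi_h: "phi h \<in> carrier Gam"
    and psi_1: "psi \<one>\<^bsub>G\<^esub> \<in> carrier Gam"
    using phi psi h by auto
  define d where "d = phi h \<otimes>\<^bsub>Gam\<^esub> (psi \<one>\<^bsub>G\<^esub> \<otimes>\<^bsub>Gam\<^esub> c \<otimes>\<^bsub>Gam\<^esub> inv\<^bsub>Gam\<^esub> (psi \<one>\<^bsub>G\<^esub>))
    \<otimes>\<^bsub>Gam\<^esub> inv\<^bsub>Gam\<^esub> (phi h)"
  define f where "f = (\<lambda>x\<in>carrier G. if x = g \<otimes>\<^bsub>G\<^esub> h then d else \<one>\<^bsub>Gam\<^esub>)"
  define u where "u = (\<lambda>x\<in>carrier G.
    inv\<^bsub>Gam\<^esub> (f x) \<otimes>\<^bsub>Gam\<^esub> inv\<^bsub>Gam\<^esub> (phi x) \<otimes>\<^bsub>Gam\<^esub> f (g \<otimes>\<^bsub>G\<^esub> x) \<otimes>\<^bsub>Gam\<^esub> phi x)"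
  have f: "f \<in> carrier G \<rightarrow>\<^sub>E carrier Gam"
    using phi_h psi_1 assms(8) by (auto simp: f_def d_def)
  have inner_commutator: "commutator (wreath Gam G) (f, \<one>\<^bsub>G\<^esub>) (phi, g) = (u, \<one>\<^bsub>G\<^esub>)"
    using wreath_commutator_base[OF assms(1,2) f assms(3)] by (simp add: u_def)
  have u: "u \<in> carrier G \<rightarrow>\<^sub>E carrier Gam"
    using f phi g by (auto simp: u_def PiE_iff)
  have "u \<one>\<^bsub>G\<^esub> = \<one>\<^bsub>Gam\<^esub>"
    using phi_1 g h assms(6,7) by (auto simp: u_def f_def)
  moreover have "u h = psi \<one>\<^bsub>G\<^esub> \<otimes>\<^bsub>Gam\<^esub> c \<otimes>\<^bsub>Gam\<^esub> inv\<^bsub>Gam\<^esub> (psi \<one>\<^bsub>G\<^esub>)"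
    using phi_h psi_1 g h assms(5,8) by (auto simp: u_def f_def d_def A.m_assoc)
  ultimately have "wr_eval \<one>\<^bsub>G\<^esub> (commutator (wreath Gam G) (u, \<one>\<^bsub>G\<^esub>) (psi, h)) = c"
    using wreath_commutator_base[OF assms(1,2) u assms(4)] psi_1 h assms(8)
    by (auto simp: wr_eval_def A.m_assoc)
  with f show thesis
    by (simp add: that inner_commutator)
qed

lemma wreath_kernel_eval_one_surjective:
  assumes "group Gam" "group G" "group H" "p \<in> hom (wreath Gam G) H"
    and "N1 \<lhd> H" "\<forall>a\<in>N1. \<forall>b\<in>N2. a \<otimes>\<^bsub>H\<^esub> b = b \<otimes>\<^bsub>H\<^esub> a"
    and "(phi, g) \<in> carrier (wreath Gam G)" "p (phi, g) \<in> N1"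
    and "(psi, h) \<in> carrier (wreath Gam G)" "p (psi, h) \<in> N2"
    and "g \<noteq> \<one>\<^bsub>G\<^esub>" "h \<noteq> \<one>\<^bsub>G\<^esub>" "g \<otimes>\<^bsub>G\<^esub> h \<noteq> \<one>\<^bsub>G\<^esub>"
  shows "carrier Gam \<subseteq> wr_eval \<one>\<^bsub>G\<^esub> ` kernel (wreath Gam G) H p"
proof
  fix c
  assume "c \<in> carrier Gam"
  obtain f where f: "f \<in> carrier G \<rightarrow>\<^sub>E carrier Gam"
    and eval: "wr_eval \<one>\<^bsub>G\<^esub> (commutator (wreath Gam G)
       (commutator (wreath Gam G) (f, \<one>\<^bsub>G\<^esub>) (phi, g)) (psi, h)) = c"
    by (rule wreath_double_commutator_eval_one[OF assms(1,2,7,9,11-13) \<open>c \<in> carrier Gam\<close>])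
  interpret W: group "wreath Gam G"
    using group_wreath assms(1,2) .
  interpret P: group_hom "wreath Gam G" H p
    using W.group_axioms assms(3,4) by (simp add: group_hom_def group_hom_axioms_def)
  have "(f, \<one>\<^bsub>G\<^esub>) \<in> carrier (wreath Gam G)"
    using f group.is_monoid[OF assms(2)] by (simp add: wreath_carrier monoid.one_closed)
  then have "commutator (wreath Gam G) (commutator (wreath Gam G) (f, \<one>\<^bsub>G\<^esub>) (phi, g)) (psi, h)
      \<in> kernel (wreath Gam G) H p"
    using assms(5-10) by (intro P.commutator_commutator_mem_kernel)
  with eval show "c \<in> wr_eval \<one>\<^bsub>G\<^esub> ` kernel (wreath Gam G) H p"
    by blast
qed

lemma wreath_lift_nontrivial:
  assumes "group_hom H G r" "subgroup N H" "r ` N \<noteq> {\<one>\<^bsub>G\<^esub>}"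
    and "p ` carrier (wreath Gam G) = carrier H"
    and "\<forall>x\<in>carrier (wreath Gam G). r (p x) = wr_pr x"
  obtains phi g where "(phi, g) \<in> carrier (wreath Gam G)" "p (phi, g) \<in> N"
    "g \<in> r ` N" "g \<noteq> \<one>\<^bsub>G\<^esub>"
proof -
  interpret R: group_hom H G r by fact
  have "r \<one>\<^bsub>H\<^esub> \<in> r ` N"
    using subgroup.one_closed[OF assms(2)] by blast
  then obtain a where a: "a \<in> N" "r a \<noteq> \<one>\<^bsub>G\<^esub>"
    using assms(3) by auto
  then have "a \<in> p ` carrier (wreath Gam G)"
    using assms(4) subgroup.subset[OF assms(2)] by auto
  then obtain phi g where lift: "(phi, g) \<in> carrier (wreath Gam G)" "p (phi, g) = a"
    by (metis imageE prod.collapse)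
  moreover have "g = r a"
    using bspec[OF assms(5) lift(1)] lift(2) by (simp add: wr_pr_def)
  ultimately show thesis
    using a by (intro that[of phi g]) auto
qed

theorem lemma5p3:
  fixes Gam :: "('a, 'c) monoid_scheme" and G :: "('b, 'd) monoid_scheme"
    and H :: "('h, 'e) monoid_scheme"
    and p :: "(('b \<Rightarrow> 'a) \<times> 'b) \<Rightarrow> 'h" and r :: "'h \<Rightarrow> 'b"
    and H1 H2 :: "'h set"
  assumes "group Gam" and "group G" and "group H"
    and "p \<in> hom (wreath Gam G) H" and "p ` carrier (wreath Gam G) = carrier H"
    and "r \<in> hom H G" and "r ` carrier H = carrier G"
    and "\<forall>x\<in>carrier (wreath Gam G). r (p x) = wr_pr x"
    and "H1 \<lhd> H" and "H2 \<lhd> H"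
    and "r ` H1 \<noteq> {\<one>\<^bsub>G\<^esub>}" and "r ` H2 \<noteq> {\<one>\<^bsub>G\<^esub>}"
    and "(\<lambda>(x, y). x \<otimes>\<^bsub>G\<^esub> y)
           \<in> iso (subgroup_generated G (r ` H1) \<times>\<times> subgroup_generated G (r ` H2)) G"
    and "\<forall>a\<in>H1. \<forall>b\<in>H2. a \<otimes>\<^bsub>H\<^esub> b = b \<otimes>\<^bsub>H\<^esub> a"
  shows "kernel (wreath Gam G) H p \<subseteq> (carrier G \<rightarrow>\<^sub>E carrier Gam) \<times> {\<one>\<^bsub>G\<^esub>}
    \<and> wr_eval \<one>\<^bsub>G\<^esub> ` kernel (wreath Gam G) H p = carrier Gam"
proof -
  interpret B: group G by fact
  interpret R: group_hom H G r
    using assms(2,3,6) by (simp add: group_hom_def group_hom_axioms_def)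
  have N1: "subgroup H1 H" and N2: "subgroup H2 H"
    using assms(9,10) by (simp_all add: normal_imp_subgroup)
  obtain phi g where alpha: "(phi, g) \<in> carrier (wreath Gam G)" "p (phi, g) \<in> H1"
    "g \<in> r ` H1" "g \<noteq> \<one>\<^bsub>G\<^esub>"
    using wreath_lift_nontrivial[OF R.group_hom_axioms N1 assms(11,5,8)] by blast
  obtain psi h where beta: "(psi, h) \<in> carrier (wreath Gam G)" "p (psi, h) \<in> H2"
    "h \<in> r ` H2" "h \<noteq> \<one>\<^bsub>G\<^esub>"
    using wreath_lift_nontrivial[OF R.group_hom_axioms N2 assms(12,5,8)] by blast
  have "r ` H1 \<subseteq> carrier G" "r ` H2 \<subseteq> carrier G"
    using N1 N2 by (auto dest: subgroup.mem_carrier)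
  then have "g \<otimes>\<^bsub>G\<^esub> h \<noteq> \<one>\<^bsub>G\<^esub>"
    using B.DirProd_iso_mult_eq_one_imp[OF assms(13) _ _ alpha(3) beta(3)] alpha(4) by blast
  then have surj: "carrier Gam \<subseteq> wr_eval \<one>\<^bsub>G\<^esub> ` kernel (wreath Gam G) H p"
    by (rule wreath_kernel_eval_one_surjective[OF assms(1-4,9,14) alpha(1,2) beta(1,2) alpha(4) beta(4)])
  have base: "kernel (wreath Gam G) H p \<subseteq> (carrier G \<rightarrow>\<^sub>E carrier Gam) \<times> {\<one>\<^bsub>G\<^esub>}"
    using assms(8) by (force simp: kernel_def wreath_carrier wr_pr_def)
  then have "wr_eval \<one>\<^bsub>G\<^esub> ` kernel (wreath Gam G) H p \<subseteq> carrier Gam"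
    by (force simp: wr_eval_def)
  with base surj show ?thesis
    by blast
qed

end
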